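(* Consider strings $P$ and $S$ such that $|S|\le |Q_k|+4\tau$ and $P$ contains $Q_k$ as a substring. Then $P$ occurs in $S$ at position $p$ if and only if $r_k(P)$ occurs in $r_k(S)$ at position $p$.
   Context: For a string $S$, $S[1..p]$ is a period of $S$ if $S[i]=S[i+p]$ for $1\le i\le |S|-p$, and $\mathrm{per}(S)$ denotes the length of the shortest period of $S$. Let $\tau\ge1$ and $\ell>10\tau$ be integers, $S_k$ a string of length at least $\ell$, and $Q_k = S_k[1+2\tau..\ell]$, so $|Q_k|=\ell-2\tau\ge 8\tau$. Let $\rho=Q_k[1..\mathrm{per}(Q_k)]$. If $\mathrm{per}(Q_k) > 4\tau$, define $Q_k' = \#$, where $\#$ is a special letter not in the main alphabet. Otherwise write $Q_k=\rho^t\rho'$ with $\rho'$ a prefix of $\rho$, and set $Q_k'=\rho^{t'}\rho'$ for some $t'\le t$ chosen so that $8\tau\le |Q_k'|<12\tau$. For any string $S$, define $r_k(S)=\varepsilon$ (the empty string) if $S$ does not contain $Q_k$, and otherwise $r_k(S)$ is the string obtained from $S$ by replacing the first occurrence of $Q_k$ with $Q'_k$. *)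

theory Defs
  imports Main
begin

text \<open>Strings are lists, positions are 0-based (the paper's position p corresponds
to index p-1; the statement is invariant under this shift).  The extended alphabet
with the special letter # is \<open>'a option\<close>, with \<open>None\<close> playing the role of #.\<close>

definition is_period :: "'a list \<Rightarrow> nat \<Rightarrow> bool" where
  "is_period S q \<longleftrightarrow> 0 < q \<and> q \<le> length S \<and> (\<forall>i. i + q < length S \<longrightarrow> S ! i = S ! (i + q))"

definition per :: "'a list \<Rightarrow> nat" where
  "per S = (LEAST q. is_period S q)"

definition occ_at :: "'a list \<Rightarrow> 'a list \<Rightarrow> nat \<Rightarrow> bool" where
  "occ_at P S p \<longleftrightarrow> p + length P \<le> length S \<and> take (length P) (drop p S) = P"

definition contains :: "'a list \<Rightarrow> 'a list \<Rightarrow> bool" where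
  "contains S Q \<longleftrightarrow> (\<exists>p. occ_at Q S p)"

text \<open>Q_k = S_k[1+2tau..l]\<close>
definition Qk :: "'a list \<Rightarrow> nat \<Rightarrow> nat \<Rightarrow> 'a list" where
  "Qk Sk tau l = take (l - 2 * tau) (drop (2 * tau) Sk)"

definition rho :: "'a list \<Rightarrow> 'a list" where
  "rho Q = take (per Q) Q"

text \<open>Q = rho^t rho' with t = |Q| div per Q and rho' = rho[1..|Q| mod per Q];
  Q' = rho^t' rho' (or # if per Q > 4 tau).\<close>
definition Qk' :: "'a list \<Rightarrow> nat \<Rightarrow> nat \<Rightarrow> 'a option list" where
  "Qk' Q tau t' = (if per Q > 4 * tau then [None]
      else map Some (concat (replicate t' (rho Q)) @ take (length Q mod per Q) (rho Q)))"

definition valid_t' :: "'a list \<Rightarrow> nat \<Rightarrow> nat \<Rightarrow> bool" where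
  "valid_t' Q tau t' \<longleftrightarrow> per Q > 4 * tau \<or>
     (t' \<le> length Q div per Q \<and> 8 * tau \<le> length (Qk' Q tau t') \<and> length (Qk' Q tau t') < 12 * tau)"

definition rk :: "'a list \<Rightarrow> 'a option list \<Rightarrow> 'a list \<Rightarrow> 'a option list" where
  "rk Q Q' S = (if contains S Q then
      (let p = (LEAST p. occ_at Q S p) in map Some (take p S) @ Q' @ map Some (drop (p + length Q) S))
    else [])"

end

theory Submission
  imports Defs
begin

(*
  Replacing an occurrence of Q by Q' preserves the occurrences of P in S as soon as the
  replacement in S is unambiguous: the result must not depend on which occurrence of Q in S
  is replaced, and turning any occurrence of Q' in the result back into Q must recover S.
  Since |S| <= |Q| + 4 tau, all these occurrences start within the first 4 tau positions.
  If per Q > 4 tau, two of them would give Q a period <= 4 tau, so Q occurs once and # occurs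
  once in r_k(S).  Otherwise Q' is the prefix of Q of length m >= 8 tau, so the replacement
  deletes |Q| - m letters, a multiple of per Q.  Two occurrences at distance e <= 4 tau give Q
  the period e as well (as m >= per Q + e), and a word of length e + (|Q| - m) with periods e
  and |Q| - m is invariant under rotation by e; hence deleting or re-inserting the block gives
  the same string at either occurrence.
*)

lemma occ_at_iff_append: "occ_at P S p \<longleftrightarrow> (\<exists>X Y. S = X @ P @ Y \<and> length X = p)"
proof
  assume "occ_at P S p"
  then have "S = take p S @ P @ drop (p + length P) S" and "length (take p S) = p"
    unfolding occ_at_def by (metis append_take_drop_id drop_drop add.commute, simp)
  then show "\<exists>X Y. S = X @ P @ Y \<and> length X = p" by blast
qed (auto simp: occ_at_def)

lemma occ_at_trans: "occ_at Q P a \<Longrightarrow> occ_at P S p \<Longrightarrow> occ_at Q S (p + a)"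
  unfolding occ_at_iff_append by (metis append.assoc length_append)

lemma occ_at_map_iff: "inj f \<Longrightarrow> occ_at (map f P) (map f S) p \<longleftrightarrow> occ_at P S p"
  unfolding occ_at_def by (simp add: drop_map take_map)

lemma take_append_if_occ_at: "occ_at W Z c \<Longrightarrow> take c Z @ W = take (c + length W) Z"
  by (auto simp: occ_at_iff_append)

lemma occ_at_length: "occ_at P S p \<Longrightarrow> p + length P \<le> length S"
  by (simp add: occ_at_def)

definition replace_at :: "nat \<Rightarrow> 'a list \<Rightarrow> 'a list \<Rightarrow> 'a list \<Rightarrow> 'a list" where
  "replace_at c Q Q' X = take c X @ Q' @ drop (c + length Q) X"

lemma replace_at_append [simp]: "replace_at (length X) Q Q' (X @ Q @ Y) = X @ Q' @ Y"
  by (simp add: replace_at_def)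

lemma occ_at_replace_at:
  assumes "occ_at Q P a" "occ_at P S p"
  shows "occ_at (replace_at a Q Q' P) (replace_at (p + a) Q Q' S) p"
proof -
  obtain A B where P: "P = A @ Q @ B" "a = length A" using assms(1) by (auto simp: occ_at_iff_append)
  obtain X Y where S: "S = X @ P @ Y" "p = length X" using assms(2) by (auto simp: occ_at_iff_append)
  have "replace_at (p + a) Q Q' S = X @ (A @ Q' @ B) @ Y"
    using replace_at_append[of "X @ A" Q Q' "B @ Y"] P S by simp
  moreover have "replace_at a Q Q' P = A @ Q' @ B" using P by simp
  ultimately show ?thesis using S(2) unfolding occ_at_iff_append by metis
qed

lemma occ_at_replace_at_self: "occ_at Q X c \<Longrightarrow> occ_at Q' (replace_at c Q Q' X) c"
  by (auto simp: occ_at_iff_append) blast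

lemma replace_at_inverse: "occ_at Q X c \<Longrightarrow> replace_at c Q' Q (replace_at c Q Q' X) = X"
  by (auto simp: occ_at_iff_append)

definition replace_unambiguous :: "'a list \<Rightarrow> 'a list \<Rightarrow> 'a list \<Rightarrow> nat \<Rightarrow> bool" where
  "replace_unambiguous Q Q' S q \<longleftrightarrow>
     (\<forall>c. occ_at Q S c \<longrightarrow> replace_at c Q Q' S = replace_at q Q Q' S) \<and>
     (\<forall>c. occ_at Q' (replace_at q Q Q' S) c \<longrightarrow> replace_at c Q' Q (replace_at q Q Q' S) = S)"

lemma occ_at_replace_at_iff:
  assumes "occ_at Q P a" and "replace_unambiguous Q Q' S q"
  shows "occ_at P S p \<longleftrightarrow> occ_at (replace_at a Q Q' P) (replace_at q Q Q' S) p"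
proof
  assume "occ_at P S p"
  then show "occ_at (replace_at a Q Q' P) (replace_at q Q Q' S) p"
    using occ_at_replace_at[OF assms(1)] occ_at_trans[OF assms(1)] assms(2)
    by (metis replace_unambiguous_def)
next
  let ?P' = "replace_at a Q Q' P" and ?S' = "replace_at q Q Q' S"
  assume occ: "occ_at ?P' ?S' p"
  have Q': "occ_at Q' ?P' a" using assms(1) by (rule occ_at_replace_at_self)
  have "replace_at (p + a) Q' Q ?S' = S"
    using occ_at_trans[OF Q' occ] assms(2) by (simp add: replace_unambiguous_def)
  then show "occ_at P S p"
    using occ_at_replace_at[OF Q' occ, of Q] replace_at_inverse[OF assms(1)] by simp
qed

definition has_period :: "'a list \<Rightarrow> nat \<Rightarrow> bool" where
  "has_period X d \<longleftrightarrow> drop d X = take (length X - d) X"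

lemma has_period_nth: "has_period X d \<longleftrightarrow> (\<forall>i. i + d < length X \<longrightarrow> X ! (i + d) = X ! i)"
  unfolding has_period_def list_eq_iff_nth_eq by (auto simp: add.commute)

lemma is_period_iff_has_period: "is_period X d \<longleftrightarrow> 0 < d \<and> d \<le> length X \<and> has_period X d"
  unfolding is_period_def has_period_nth by auto

lemma has_period_map_iff: "inj f \<Longrightarrow> has_period (map f X) d \<longleftrightarrow> has_period X d"
  unfolding has_period_def by (simp add: drop_map take_map)

lemma has_period_drop:
  assumes "has_period X d"
  shows "has_period (drop k X) d"
  unfolding has_period_nth
proof (intro allI impI)
  fix i assume "i + d < length (drop k X)"
  then show "drop k X ! (i + d) = drop k X ! i"
    using assms unfolding has_period_nth by (simp add: add.assoc[symmetric])
qed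

lemma nth_mod_period: "has_period X d \<Longrightarrow> i < length X \<Longrightarrow> X ! i = X ! (i mod d)"
proof (induction i rule: less_induct)
  case (less i)
  show ?case
  proof (cases "d \<le> i \<and> 0 < d")
    case True
    then have "i - d + d < length X" using less.prems by simp
    then have "X ! (i - d + d) = X ! (i - d)" using less.prems(1) unfolding has_period_nth by blast
    then have "X ! i = X ! (i - d)" using True by simp
    also have "\<dots> = X ! ((i - d) mod d)" using less True by simp
    finally show ?thesis using True by (simp add: le_mod_geq)
  qed auto
qed

lemma has_period_mult: "has_period X d \<Longrightarrow> has_period X (k * d)"
proof (induction k)
  case (Suc k)
  show ?case
    unfolding has_period_nth
  proof (intro allI impI)
    fix i assume i: "i + Suc k * d < length X"
    then have "X ! (i + k * d + d) = X ! (i + k * d)" using Suc.prems unfolding has_period_nth by simp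
    also have "\<dots> = X ! i" using Suc i unfolding has_period_nth by simp
    finally have "X ! (i + k * d + d) = X ! i" .
    then show "X ! (i + Suc k * d) = X ! i" by (simp add: algebra_simps)
  qed
qed (simp add: has_period_def)

lemma has_period_extend:
  assumes "has_period X p" "0 < p" "has_period (take k X) e" "p + e \<le> k"
  shows "has_period X e"
  unfolding has_period_nth
proof (intro allI impI)
  fix i assume i: "i + e < length X"
  have r: "i mod p < p" "i mod p + e < length X"
    using \<open>0 < p\<close> i mod_less_eq_dividend[of i p] by (simp, linarith)
  have "X ! (i + e) = X ! ((i mod p + e) mod p)"
    using nth_mod_period[OF assms(1) i] by (simp add: mod_add_left_eq)
  also have "\<dots> = X ! (i mod p + e)"
    using nth_mod_period[OF assms(1), of "i mod p + e"] r i by simp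
  also have "\<dots> = X ! (i mod p)"
    using assms(3) r i \<open>p + e \<le> k\<close> unfolding has_period_nth
    by (auto dest!: spec[of _ "i mod p"])
  also have "\<dots> = X ! i" using nth_mod_period[OF assms(1)] i by simp
  finally show "X ! (i + e) = X ! i" .
qed

lemma has_period_if_occ_at_shift:
  assumes "occ_at W Z c" "occ_at W Z (c + e)"
  shows "has_period W e"
proof -
  obtain A B where Z: "Z = A @ W @ B" "c = length A" using assms(1) by (auto simp: occ_at_iff_append)
  obtain B' where "drop (c + e) Z = W @ B'" using assms(2) by (auto simp: occ_at_iff_append)
  then have "drop e (W @ B) = W @ B'" using Z by simp
  then have "take (length W - e) (drop e (W @ B)) = take (length W - e) (W @ B')" by simp
  then show ?thesis unfolding has_period_def by simp
qed

lemma drop_append_take_eq_self: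
  assumes "length X = d + e" "has_period X d" "has_period X e"
  shows "drop d X @ take d X = X"
proof -
  have "drop d X = take e X" "take d X = drop e X" using assms unfolding has_period_def by simp_all
  then show ?thesis by simp
qed

lemma take_drop_period_eq:
  assumes "has_period Q D" "j + D \<le> length Q"
  shows "take j Q @ drop (j + D) Q = take (length Q - D) Q"
proof -
  have "drop (j + D) Q = drop j (drop D Q)" by simp
  also have "\<dots> = drop j (take (length Q - D) Q)" using assms(1) by (simp add: has_period_def)
  finally have "drop (j + D) Q = drop j (take (length Q - D) Q)" .
  moreover have "take j Q = take j (take (length Q - D) Q)" using assms(2) by simp
  ultimately show ?thesis by (metis append_take_drop_id)
qed

lemma concat_replicate_take_period:
  assumes "has_period Q p" "t * p + r \<le> length Q" "r \<le> p"
  shows "concat (replicate t (take p Q)) @ take r Q = take (t * p + r) Q"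
  using assms(2)
proof (induction t)
  case (Suc t)
  have "take (Suc t * p + r) Q = take p Q @ take (t * p + r) (drop p Q)"
    by (simp add: take_add add.assoc)
  also have "\<dots> = take p Q @ take (t * p + r) Q"
    using assms(1) Suc.prems by (simp add: has_period_def)
  finally show ?case using Suc by simp
qed (use assms(3) in simp)

lemma replace_at_take_shift:
  assumes "has_period Q (length Q - m)" "m \<le> length Q"
    and "occ_at Q S c" "occ_at Q S c'" "c \<le> c'" "c' \<le> c + m"
  shows "replace_at c' Q (take m Q) S = replace_at c Q (take m Q) S"
proof -
  obtain X Y where S: "S = X @ Q @ Y" "c' = length X" using assms(4) by (auto simp: occ_at_iff_append)
  obtain X' Y' where S': "S = X' @ Q @ Y'" "c = length X'" using assms(3) by (auto simp: occ_at_iff_append)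
  define j where "j = c + m - c'"
  have j: "j \<le> m" "c + m = c' + j" "c + length Q = c' + (j + (length Q - m))"
    using assms(2,5,6) unfolding j_def by simp_all
  have "replace_at c' Q (take m Q) S = X @ take j Q @ drop (j + (length Q - m)) Q @ Y"
    using S take_drop_period_eq[OF assms(1), of j] j assms(2) by simp
  also have "\<dots> = take (c + m) S @ drop (c + length Q) S"
    using S j assms(2) by simp
  also have "\<dots> = replace_at c Q (take m Q) S"
    using S' assms(2) by (simp add: replace_at_def)
  finally show ?thesis .
qed

lemma replace_at_take_shift_back:
  assumes "has_period Q (length Q - m)" "has_period Q e" "e \<le> m" "m \<le> length Q"
    and "occ_at (take m Q) Z c" "occ_at (take m Q) Z (c + e)"
  shows "replace_at (c + e) (take m Q) Q Z = replace_at c (take m Q) Q Z"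
proof -
  obtain A B where Z: "Z = A @ take m Q @ B" "c + e = length A"
    using assms(6) by (auto simp: occ_at_iff_append)
  have cm: "c + m = length A + (m - e)" using Z(2) assms(3) by simp
  define V where "V = drop (m - e) Q"
  have V: "take (m - e) Q @ V = Q" "take e V = drop (m - e) (take m Q)" "drop e V = drop m Q"
    using assms(3,4) unfolding V_def by (simp_all add: drop_take)
  \<comment> \<open>V = take e V @ drop m Q, and rotating V moves the inserted block past take e V\<close>
  have rot: "drop e V @ take e V = V"
    by (rule drop_append_take_eq_self[of _ _ "length Q - m"])
      (use assms in \<open>simp_all add: V_def has_period_drop\<close>)
  have "take c Z @ take m Q = take (c + m) Z"
    using take_append_if_occ_at[OF assms(5)] assms(4) by simp
  also have "\<dots> = A @ take (m - e) Q" using assms(3,4) unfolding cm Z(1) by simp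
  finally have prefix: "take c Z @ take m Q = A @ take (m - e) Q" .
  have suffix: "drop (c + m) Z = take e V @ B"
    using V(2) assms(3,4) unfolding cm by (simp add: Z(1))
  have "replace_at (c + e) (take m Q) Q Z = A @ Q @ B" unfolding Z by simp
  also have "\<dots> = A @ take (m - e) Q @ drop e V @ take e V @ B" by (simp add: rot V(1))
  also have "\<dots> = (take c Z @ take m Q) @ drop m Q @ drop (c + m) Z"
    unfolding prefix suffix V(3)[symmetric] by simp
  also have "\<dots> = replace_at c (take m Q) Q Z"
    using assms(4) by (simp add: replace_at_def)
  finally show ?thesis .
qed

lemma replace_unambiguous_periodic:
  assumes per: "has_period Q p" "0 < p" "p \<le> 4 * tau" "p dvd length Q - m"
    and m: "8 * tau \<le> m" "m \<le> length Q"
    and S: "length S \<le> length Q + 4 * tau" "occ_at Q S q" "\<And>c. occ_at Q S c \<Longrightarrow> q \<le> c"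
  shows "replace_unambiguous Q (take m Q) S q"
proof -
  let ?S' = "replace_at q Q (take m Q) S"
  have D: "has_period Q (length Q - m)" using per(1,4) has_period_mult by (metis dvd_def mult.commute)
  have "replace_at c Q (take m Q) S = ?S'" if "occ_at Q S c" for c
    using replace_at_take_shift[OF D m(2) S(2) that] S that occ_at_length m by fastforce
  moreover have "replace_at c (take m Q) Q ?S' = S" if c: "occ_at (take m Q) ?S' c" for c
  proof -
    have len: "length ?S' \<le> m + 4 * tau"
      using S(1) occ_at_length[OF S(2)] m(2) by (simp add: replace_at_def)
    have shift: "replace_at c2 (take m Q) Q ?S' = replace_at c1 (take m Q) Q ?S'"
      if "occ_at (take m Q) ?S' c1" "occ_at (take m Q) ?S' c2" "c1 \<le> c2" for c1 c2
    proof -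
      define e where "e = c2 - c1"
      have c2: "c2 = c1 + e" "e \<le> 4 * tau"
        using that occ_at_length[OF that(2)] len m(2) unfolding e_def by auto
      have "has_period (take m Q) e" using that c2 has_period_if_occ_at_shift by metis
      then have "has_period Q e" using has_period_extend[OF per(1,2)] per(3) m(1) c2(2) by simp
      then show ?thesis using replace_at_take_shift_back[OF D _ _ m(2)] that c2 m by simp
    qed
    have q: "occ_at (take m Q) ?S' q" using S(2) by (rule occ_at_replace_at_self)
    have "replace_at c (take m Q) Q ?S' = replace_at q (take m Q) Q ?S'"
      using shift[OF c q] shift[OF q c] by (cases "c \<le> q") auto
    then show ?thesis using replace_at_inverse[OF S(2)] by simp
  qed
  ultimately show ?thesis unfolding replace_unambiguous_def by blast
qed

lemma replace_unambiguous_aperiodic: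
  assumes aper: "\<And>d. 0 < d \<Longrightarrow> d \<le> 4 * tau \<Longrightarrow> \<not> has_period Q d"
    and S: "x \<notin> set S" "length S \<le> length Q + 4 * tau" "occ_at Q S q"
  shows "replace_unambiguous Q [x] S q"
proof -
  have no_shift: "c1 = c2" if "occ_at Q S c1" "occ_at Q S c2" "c1 \<le> c2" for c1 c2
  proof (rule ccontr)
    assume "c1 \<noteq> c2"
    have "has_period Q (c2 - c1)" using has_period_if_occ_at_shift[of Q S c1 "c2 - c1"] that by simp
    moreover have "c2 - c1 \<le> 4 * tau" using occ_at_length[OF that(2)] S(2) by linarith
    ultimately show False using aper[of "c2 - c1"] that \<open>c1 \<noteq> c2\<close> by linarith
  qed
  have "replace_at c Q [x] S = replace_at q Q [x] S" if "occ_at Q S c" for c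
    using no_shift[OF that S(3)] no_shift[OF S(3) that] by fastforce
  moreover have "c = q" if c: "occ_at [x] (replace_at q Q [x] S) c" for c
  proof -
    obtain X Y where XY: "replace_at q Q [x] S = X @ [x] @ Y" "c = length X"
      using c unfolding occ_at_iff_append by blast
    have "x \<notin> set (take q S)" "x \<notin> set (drop (q + length Q) S)"
      using S(1) in_set_takeD in_set_dropD by metis+
    then have "take q S = X"
      using XY(1) unfolding replace_at_def by (simp add: append_Cons_eq_iff)
    then show ?thesis using XY(2) occ_at_length[OF S(3)] by auto
  qed
  ultimately show ?thesis unfolding replace_unambiguous_def using replace_at_inverse[OF S(3)] by auto
qed

lemma per_pos_has_period:
  assumes "Q \<noteq> []"
  shows "0 < per Q" "has_period Q (per Q)"
proof -
  have "is_period Q (length Q)" using assms by (simp add: is_period_def)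
  then have "is_period Q (per Q)" unfolding per_def by (rule LeastI)
  then show "0 < per Q" "has_period Q (per Q)" by (simp_all add: is_period_iff_has_period)
qed

lemma per_le_if_has_period: "has_period Q d \<Longrightarrow> 0 < d \<Longrightarrow> d \<le> length Q \<Longrightarrow> per Q \<le> d"
  unfolding per_def by (rule Least_le) (simp add: is_period_iff_has_period)

lemma Qk'_eq_take:
  assumes "Q \<noteq> []" "per Q \<le> 4 * tau" "t' \<le> length Q div per Q"
  shows "Qk' Q tau t' = map Some (take (t' * per Q + length Q mod per Q) Q)"
proof -
  have "t' * per Q \<le> length Q div per Q * per Q" using assms(3) by simp
  then have "t' * per Q + length Q mod per Q \<le> length Q"
    using div_mult_mod_eq[of "length Q" "per Q"] by linarith
  then show ?thesis
    using assms concat_replicate_take_period[OF per_pos_has_period(2)[OF assms(1)], of t']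
    by (simp add: Qk'_def rho_def per_pos_has_period(1))
qed

lemma replace_unambiguous_Qk':
  assumes "8 * tau < length Q" "valid_t' Q tau t'"
    and S: "length S \<le> length Q + 4 * tau" "occ_at Q S q" "\<And>c. occ_at Q S c \<Longrightarrow> q \<le> c"
  shows "replace_unambiguous (map Some Q) (Qk' Q tau t') (map Some S) q"
proof -
  have Q: "Q \<noteq> []" using assms(1) by auto
  have S': "length (map Some S) \<le> length (map Some Q) + 4 * tau" "occ_at (map Some Q) (map Some S) q"
    "\<And>c. occ_at (map Some Q) (map Some S) c \<Longrightarrow> q \<le> c"
    using S by (simp_all add: occ_at_map_iff)
  show ?thesis
  proof (cases "4 * tau < per Q")
    case True
    have "\<not> has_period (map Some Q) d" if "0 < d" "d \<le> 4 * tau" for d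
      using per_le_if_has_period[of Q d] that True assms(1) by (auto simp: has_period_map_iff)
    then show ?thesis
      using replace_unambiguous_aperiodic[where x = None, OF _ _ S'(1,2)] True
      by (auto simp: Qk'_def)
  next
    case False
    define m where "m = t' * per Q + length Q mod per Q"
    have t': "t' \<le> length Q div per Q" and m8: "8 * tau \<le> length (Qk' Q tau t')"
      using assms(2) False by (simp_all add: valid_t'_def)
    have "t' * per Q \<le> length Q div per Q * per Q" using t' by (rule mult_le_mono1)
    then have "m \<le> length Q" "length Q - m = (length Q div per Q - t') * per Q"
      using div_mult_mod_eq[of "length Q" "per Q"] unfolding m_def diff_mult_distrib by linarith+
    moreover have "Qk' Q tau t' = take m (map Some Q)"
      using Qk'_eq_take[OF Q _ t'] False by (simp add: m_def take_map)
    ultimately show ?thesis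
      using replace_unambiguous_periodic[of "map Some Q" "per Q" tau m, OF _ _ _ _ _ _ S'] m8
        per_pos_has_period[OF Q] False by (simp add: has_period_map_iff)
  qed
qed

lemma rk_eq_replace_at:
  assumes "contains X Q"
  shows "rk Q Q' X = replace_at (LEAST p. occ_at Q X p) (map Some Q) Q' (map Some X)"
  using assms by (simp add: rk_def Let_def replace_at_def take_map drop_map)

lemma Qk'_not_Nil:
  assumes "Q \<noteq> []" "valid_t' Q tau t'"
  shows "Qk' Q tau t' \<noteq> []"
proof (cases "4 * tau < per Q")
  case False
  then have "8 * tau \<le> length (Qk' Q tau t')" "0 < tau"
    using assms per_pos_has_period(1)[OF assms(1)] by (simp_all add: valid_t'_def)
  then show ?thesis by auto
qed (simp add: Qk'_def)

lemma occ_at_iff_occ_at_rk: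
  assumes Q: "8 * tau < length Q" and t': "valid_t' Q tau t'"
    and S: "length S \<le> length Q + 4 * tau" and P: "contains P Q"
  shows "occ_at P S p \<longleftrightarrow> occ_at (rk Q (Qk' Q tau t') P) (rk Q (Qk' Q tau t') S) p"
proof -
  define Q' where "Q' = Qk' Q tau t'"
  define a where "a = (LEAST a. occ_at Q P a)"
  have a: "occ_at Q P a" using P unfolding a_def contains_def by (metis LeastI)
  have rkP: "rk Q Q' P = replace_at a (map Some Q) Q' (map Some P)"
    using P unfolding a_def by (rule rk_eq_replace_at)
  show ?thesis
  proof (cases "contains S Q")
    case False
    have "Q \<noteq> []" using Q by auto
    then have "Q' \<noteq> []" using Qk'_not_Nil[OF _ t'] unfolding Q'_def by blast
    then have "\<not> occ_at (rk Q Q' P) [] p" by (simp add: rkP replace_at_def occ_at_def)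
    then show ?thesis using False occ_at_trans[OF a] by (auto simp: rk_def contains_def Q'_def)
  next
    case True
    define q where "q = (LEAST q. occ_at Q S q)"
    have q: "occ_at Q S q" "\<And>c. occ_at Q S c \<Longrightarrow> q \<le> c"
      using True unfolding q_def contains_def by (auto intro: LeastI Least_le)
    have "occ_at P S p \<longleftrightarrow> occ_at (map Some P) (map Some S) p" by (simp add: occ_at_map_iff)
    also have "\<dots> \<longleftrightarrow> occ_at (replace_at a (map Some Q) Q' (map Some P)) (replace_at q (map Some Q) Q' (map Some S)) p"
      using occ_at_replace_at_iff[OF _ replace_unambiguous_Qk'[OF Q t' S q]] a
      unfolding Q'_def by (simp add: occ_at_map_iff)
    also have "\<dots> \<longleftrightarrow> occ_at (rk Q Q' P) (rk Q Q' S) p"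
      using rkP rk_eq_replace_at[OF True] unfolding q_def by simp
    finally show ?thesis unfolding Q'_def .
  qed
qed

theorem lemma6:
  fixes Sk P S :: "'a list" and tau l t' p :: nat
  assumes "tau \<ge> 1" and "l > 10 * tau" and "length Sk \<ge> l"
    and "valid_t' (Qk Sk tau l) tau t'"
    and "length S \<le> length (Qk Sk tau l) + 4 * tau"
    and "contains P (Qk Sk tau l)"
  shows "occ_at P S p \<longleftrightarrow>
    occ_at (rk (Qk Sk tau l) (Qk' (Qk Sk tau l) tau t') P) (rk (Qk Sk tau l) (Qk' (Qk Sk tau l) tau t') S) p"
proof -
  have "8 * tau < length (Qk Sk tau l)" using assms(2,3) by (simp add: Qk_def)
  then show ?thesis using occ_at_iff_occ_at_rk assms(4-6) by blast
qed

end
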